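(* Let $p$ be an odd prime and $b,c\in\mathbb Z$. Then, for every integer $x$, $$(x^2+bx+c)^{p-2}-c^{p-2}\equiv \binom{p-2}{1}_{b,c}x^{p-1}+\binom{p-2}{0}_{b,c}x^{p-2}+\sum_{1<k<p-1}\left(\binom{p-2}{k}_{b,c}+c^{p-1-k}\binom{p-2}{p-1-k}_{b,c}\right)x^{k-1}\pmod p.$$ Equivalently, the two sides are congruent as polynomials in $\mathbb F_p[x]$ modulo $x^p-x$.
   Context: For $n\in\mathbb N$ and $b,c\in\mathbb Z$, the generalized trinomial coefficients $\binom{n}{k}_{b,c}$ ($k\in\mathbb Z$) are the integers defined by the Laurent polynomial identity $\left(x+b+\frac{c}{x}\right)^n=\sum_{k\in\mathbb Z}\binom{n}{k}_{b,c}x^k$; in particular $\binom nk_{b,c}=0$ when $|k|>n$. *)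

theory Defs
  imports "HOL-Computational_Algebra.Polynomial" "HOL-Number_Theory.Cong" "HOL-Computational_Algebra.Primes"
begin

text \<open>Generalized trinomial coefficient: the coefficient of x^k in the Laurent
polynomial (x + b + c/x)^n.  Since (x + b + c/x)^n = x^(-n) (x^2 + b x + c)^n,
this is the coefficient of x^(n+k) in the polynomial (x^2 + b x + c)^n, and it is
0 when n + k < 0 (in fact whenever |k| > n).\<close>
definition trinom :: "nat \<Rightarrow> int \<Rightarrow> int \<Rightarrow> int \<Rightarrow> int" where
  "trinom n k b c =
     (if int n + k < 0 then 0 else coeff ([:c, b, 1:] ^ n) (nat (int n + k)))"

end

theory Submission
  imports Defs "HOL-Number_Theory.Residues"
begin

text \<open>Let n = p - 2 and Q = x^2 + b x + c, so that trinom n (j - n) is the coefficient of x^j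
in Q^n and Q^n - c^n is the sum of these monomials for 1 \<le> j \<le> 2n. By Fermat's little theorem
the high powers x^(n+k), 2 \<le> k \<le> n, fold onto x^(k-1); the low coefficients are rewritten by
the symmetry trinom n (-i) = c^i trinom n i, which reflects x^2 Q(c/x) = c Q(x) and follows by
induction on n from the three-term recurrence of the coefficients.\<close>

lemma fermat_theorem_power_nat:
  fixes p a :: nat
  assumes "prime p"
  shows "[a ^ p = a] (mod p)"
proof (cases "p dvd a")
  case True
  then show ?thesis
    by (metis assms cong_def dvd_imp_mod_0 dvd_power dvd_trans prime_gt_0_nat)
next
  case False
  have "[a ^ (p - 1) * a = 1 * a] (mod p)"
    using fermat_theorem[OF assms False] by (rule cong_mult) simp
  moreover have "a ^ (p - 1) * a = a ^ p"
    using prime_gt_0_nat[OF assms] by (simp flip: power_Suc2)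
  ultimately show ?thesis by simp
qed

lemma fermat_theorem_power_int:
  fixes p :: nat and x :: int
  assumes "prime p"
  shows "[x ^ p = x] (mod int p)"
proof -
  define a where "a = nat (x mod int p)"
  have x_cong_a: "[x = int a] (mod int p)"
    using prime_gt_0_nat[OF assms] by (simp add: a_def cong_def)
  have "[int a ^ p = int a] (mod int p)"
    using fermat_theorem_power_nat[OF assms] by (metis cong_int_iff of_nat_power)
  then show ?thesis
    using x_cong_a cong_pow[OF x_cong_a] by (meson cong_sym cong_trans)
qed

lemma power_add_pred_prime_cong:
  fixes p m :: nat and x :: int
  assumes "prime p" and "m \<ge> 1"
  shows "[x ^ (m + (p - 1)) = x ^ m] (mod int p)"
proof -
  have "x ^ (m + (p - 1)) = x ^ (m - 1) * x ^ p"
    using assms prime_gt_0_nat[OF assms(1)] by (simp flip: power_add)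
  also have "[\<dots> = x ^ (m - 1) * x] (mod int p)"
    by (intro cong_mult cong_refl fermat_theorem_power_int assms(1))
  also have "x ^ (m - 1) * x = x ^ m"
    using assms(2) by (simp flip: power_Suc2)
  finally show ?thesis .
qed

lemma poly_eq_sum_coeff_atMost:
  fixes p :: "'a::comm_semiring_1 poly"
  assumes "degree p \<le> n"
  shows "poly p x = (\<Sum>i\<le>n. Polynomial.coeff p i * x ^ i)"
proof -
  have "poly p x = (\<Sum>i\<le>degree p. Polynomial.coeff p i * x ^ i)"
    by (rule poly_altdef)
  also have "\<dots> = (\<Sum>i\<le>n. Polynomial.coeff p i * x ^ i)"
    by (intro sum.mono_neutral_left) (use assms in \<open>auto simp: coeff_eq_0\<close>)
  finally show ?thesis .
qed

lemma trinom_Suc: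
  "trinom (Suc n) k b c = c * trinom n (k + 1) b c + b * trinom n k b c + trinom n (k - 1) b c"
proof -
  define P where "P = [:c, b, 1:] ^ n"
  have power_Suc:
    "[:c, b, 1:] ^ Suc n = Polynomial.smult c P + pCons 0 (Polynomial.smult b P + pCons 0 P)"
    unfolding P_def by (simp add: mult_pCons_left)
  consider "int n + k + 1 < 0" | "int n + k + 1 = 0" | "int n + k + 1 = 1"
    | j where "int n + k + 1 = int j + 2"
    using int_nat_eq[of "int n + k - 1"] by (smt (verit))
  then show ?thesis
    by cases (auto simp: trinom_def power_Suc P_def[symmetric] nat_add_distrib numeral_2_eq_2
        algebra_simps)
qed

lemma trinom_neg:
  "trinom n (- int i) b c = c ^ i * trinom n (int i) b c"
proof (induction n arbitrary: i)
  case 0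
  then show ?case by (cases i) (auto simp: trinom_def)
next
  case (Suc n)
  show ?case
  proof (cases i)
    case (Suc j)
    have "trinom (Suc n) (- int i) b c
        = c * trinom n (- int j) b c + b * trinom n (- int (j + 1)) b c + trinom n (- int (j + 2)) b c"
      by (simp add: trinom_Suc Suc algebra_simps)
    also have "\<dots> = c ^ i *
        (trinom n (int j) b c + b * trinom n (int (j + 1)) b c + c * trinom n (int (j + 2)) b c)"
      using Suc.IH[of j] Suc.IH[of "j + 1"] Suc.IH[of "j + 2"] by (simp add: Suc algebra_simps)
    also have "\<dots> = c ^ i * trinom (Suc n) (int i) b c"
      by (simp add: trinom_Suc Suc algebra_simps)
    finally show ?thesis .
  qed simp
qed

lemma sum_atLeastAtMost_double_split:
  fixes f :: "nat \<Rightarrow> 'a::comm_monoid_add"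
  assumes "n \<ge> 1"
  shows "(\<Sum>j\<in>{1..2*n}. f j) = f (n + 1) + f n + (\<Sum>k\<in>{2..n}. f (n + k) + f (k - 1))"
proof -
  have "sum f {1..2*n} = sum f {1..n-1} + sum f {n..n+1} + sum f {n+2..2*n}"
    using sum.ub_add_nat[of 1 "n-1" f "n+1"] sum.ub_add_nat[of n "n+1" f "n-1"] assms
    by (simp add: mult_2 add.assoc)
  moreover have "sum f {1..n-1} = (\<Sum>k\<in>{2..n}. f (k - 1))"
    using sum.shift_bounds_cl_nat_ivl[of "\<lambda>k. f (k - 1)" 1 1 "n-1"] assms by (simp add: numeral_2_eq_2)
  moreover have "sum f {n+2..2*n} = (\<Sum>k\<in>{2..n}. f (n + k))"
    using sum.shift_bounds_cl_nat_ivl[of f 2 n n] by (simp add: mult_2 add.commute)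
  ultimately show ?thesis by (simp add: sum.distrib ac_simps)
qed

lemma trinom_power_minus_const:
  fixes x b c :: int
  shows "(x^2 + b*x + c)^n - c^n = (\<Sum>j\<in>{1..2*n}. trinom n (int j - int n) b c * x^j)"
proof -
  have "degree ([:c, b, 1:] ^ n) \<le> 2 * n"
    using degree_power_le[of "[:c, b, 1:]" n] by simp
  have "(x^2 + b*x + c)^n = poly ([:c, b, 1:] ^ n) x"
    by (simp add: poly_power algebra_simps power2_eq_square)
  also have "\<dots> = (\<Sum>j\<le>2*n. Polynomial.coeff ([:c, b, 1:] ^ n) j * x^j)"
    by (rule poly_eq_sum_coeff_atMost) fact
  also have "\<dots> = c^n + (\<Sum>j\<in>{1..2*n}. trinom n (int j - int n) b c * x^j)"
    by (simp add: atMost_atLeast0 sum.atLeast_Suc_atMost coeff_0_power trinom_def)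
  finally show ?thesis by simp
qed

theorem lemma2p2:
  fixes p :: nat and b c x :: int
  assumes "prime p" and "odd p"
  shows "[(x^2 + b*x + c)^(p-2) - c^(p-2)
          = trinom (p-2) 1 b c * x^(p-1) + trinom (p-2) 0 b c * x^(p-2)
            + (\<Sum>k\<in>{k. 1 < k \<and> k < p-1}.
                 (trinom (p-2) (int k) b c + c^(p-1-k) * trinom (p-2) (int (p-1-k)) b c)
                 * x^(k-1))] (mod int p)"
proof -
  have "p \<ge> 3"
    using prime_ge_2_nat[OF assms(1)] assms(2) by (cases "p = 2") auto
  then obtain n where p: "p = n + 2" and n: "n \<ge> 1"
    by (intro that[of "p - 2"]) auto
  let ?T = "\<lambda>k. trinom n k b c"
  have term_cong: "[?T k * x^(n+k) + ?T (int (k-1) - int n) * x^(k-1)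
      = (?T k + c^(n+1-k) * ?T (int (n+1-k))) * x^(k-1)] (mod int p)" if "k \<in> {2..n}" for k
  proof -
    have "[x^((k-1) + (p-1)) = x^(k-1)] (mod int p)"
      by (rule power_add_pred_prime_cong[OF assms(1)]) (use that in auto)
    moreover have "(k-1) + (p-1) = n + k"
      using that p by simp
    ultimately have "[x^(n+k) = x^(k-1)] (mod int p)"
      by simp
    moreover have "?T (int (k-1) - int n) = c^(n+1-k) * ?T (int (n+1-k))"
      using trinom_neg[of n "n+1-k" b c] that by (simp add: of_nat_diff diff_diff_eq)
    ultimately show ?thesis
      by (simp add: distrib_right cong_add cong_scalar_left)
  qed
  have expansion: "(x^2 + b*x + c)^n - c^n
      = ?T 1 * x^(n+1) + ?T 0 * x^n + (\<Sum>k\<in>{2..n}. ?T k * x^(n+k) + ?T (int (k-1) - int n) * x^(k-1))"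
    unfolding trinom_power_minus_const sum_atLeastAtMost_double_split[OF n] by simp
  have "[(x^2 + b*x + c)^n - c^n = ?T 1 * x^(n+1) + ?T 0 * x^n
      + (\<Sum>k\<in>{2..n}. (?T k + c^(n+1-k) * ?T (int (n+1-k))) * x^(k-1))] (mod int p)"
    unfolding expansion by (rule cong_add[OF cong_refl cong_sum]) (use term_cong in blast)
  moreover have "{k. 1 < k \<and> k < p - 1} = {2..n}" and "p - 2 = n" and "p - 1 = n + 1"
    using p by auto
  ultimately show ?thesis
    by simp
qed

end
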